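(* Let $\xi\in X^\ast(T)$ be a dominant integral weight and $V_{\mathbb{R}}^\xi:=\{z\in V_{\mathbb{R}}:\lambda(z)\ge\mathrm{val}_L(\gamma_\xi^{dom}(\lambda))\text{ for all }\lambda\in\Lambda\}$. Then $V_{\mathbb{R}}^\xi=\{z\in V_{\mathbb{R}}:(z+\eta_L+\xi_L)^{dom}\le\eta_L+\xi_L\}$.
   Context: $L$ is a finite extension of $\mathbb{Q}_p$, $K$ a complete extension field of $\mathbb{Q}_p$ containing $L$; $|\ |_L$ normalized absolute value of $L$, $\pi_L$ a prime element, $\mathrm{val}_L:K^\times\to\mathbb{R}$ with $\mathrm{val}_L(L^\times)=\mathbb{Z}$. $G$ is the $L$-points of an $L$-split connected reductive group, $T$ a maximal $L$-split torus, $P$ a Borel subgroup containing $T$, $\Phi^+$ the roots positive for $P$, $W=N(T)/T$ acting on $T$ and $\Lambda$ by conjugation, $U_0$ a maximal compact subgroup special for $T$, $\Lambda=T/(U_0\cap T)$, $\lambda:T\to\Lambda$ the projection, $T^{--}=\{t:|\alpha(t)|_L\ge1\ \forall\alpha\in\Phi^+\}$, $\Lambda^{--}=\lambda(T^{--})$. $V_{\mathbb{R}}=\mathrm{Hom}(\Lambda,\mathbb{R})\cong X^\ast(T)\otimes\mathbb{R}$ via $\chi\mapsto\mathrm{val}_L\circ\chi$; $\lambda\in\Lambda$ is viewed as a linear form on $V_{\mathbb{R}}$. Partial order: $z\le z'$ iff $z'-z\in\sum_{\alpha\in\Phi^+}\mathbb{R}_{\ge0}\mathrm{val}_L\circ\alpha$;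 $z^{dom}$ is the unique dominant point in the $W$-orbit of $z$. $\xi_L:=\mathrm{val}_L\circ\xi$, $\eta$ is half the sum of the positive roots in $V_{\mathbb{R}}$, $\eta_L:=[L:\mathbb{Q}_p]\eta$. $\gamma_\xi(w,\lambda(t)):=\big(\prod_{\alpha\in\Phi^+\setminus{}^{w^{-1}}\Phi^+}|\alpha(t)|_L\big)\pi_L^{\mathrm{val}_L(\xi({}^wt))-\mathrm{val}_L(\xi(t))}$, and $\gamma_\xi^{dom}(\lambda):=\gamma_\xi(w,\lambda)$ for any $w$ with ${}^w\lambda\in\Lambda^{--}$. *)

theory Defs
  imports "HOL-Analysis.Analysis"
begin

text \<open>Coordinates: X^*(T) and Lambda = X_*(T) are both identified with the integer
points of real^'n, with the pairing given by the dot product.  V_R = X^*(T) (x) R is real^'n;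
via chi |-> val_L o chi the character chi is the vector chi itself, and
lambda in Lambda acts on V_R by z |-> z \<bullet> lambda, so that val_L(chi(t)) = chi \<bullet> lambda(t).\<close>

definition int_pts :: "(real ^ 'n) set" where
  "int_pts = {v. \<forall>i. v $ i \<in> \<int>}"

definition refl_X :: "(real ^ 'n \<Rightarrow> real ^ 'n) \<Rightarrow> real ^ 'n \<Rightarrow> real ^ 'n \<Rightarrow> real ^ 'n" where
  "refl_X cor \<alpha> x = x - (x \<bullet> cor \<alpha>) *\<^sub>R \<alpha>"

definition refl_Lam :: "(real ^ 'n \<Rightarrow> real ^ 'n) \<Rightarrow> real ^ 'n \<Rightarrow> real ^ 'n \<Rightarrow> real ^ 'n" where
  "refl_Lam cor \<alpha> y = y - (\<alpha> \<bullet> y) *\<^sub>R cor \<alpha>"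

definition reduced_root_datum :: "(real ^ 'n) set \<Rightarrow> (real ^ 'n \<Rightarrow> real ^ 'n) \<Rightarrow> bool" where
  "reduced_root_datum R cor \<longleftrightarrow>
     finite R \<and> R \<subseteq> int_pts \<and> cor ` R \<subseteq> int_pts \<and> inj_on cor R \<and>
     (\<forall>\<alpha>\<in>R. \<alpha> \<bullet> cor \<alpha> = 2) \<and>
     (\<forall>\<alpha>\<in>R. refl_X cor \<alpha> ` R = R) \<and>
     (\<forall>\<alpha>\<in>R. refl_Lam cor \<alpha> ` (cor ` R) = cor ` R) \<and>
     (\<forall>\<alpha>\<in>R. \<forall>c::real. c *\<^sub>R \<alpha> \<in> R \<longrightarrow> c = 1 \<or> c = -1)"

definition positive_system :: "(real ^ 'n) set \<Rightarrow> (real ^ 'n) set \<Rightarrow> bool" where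
  "positive_system R Rp \<longleftrightarrow>
     (\<exists>v. (\<forall>\<alpha>\<in>R. v \<bullet> \<alpha> \<noteq> 0) \<and> Rp = {\<alpha>\<in>R. v \<bullet> \<alpha> > 0})"

text \<open>Weyl group, as pairs (action on X^*(T) (x) R, action on Lambda (x) R),
generated by the simple-reflection pairs; the two actions are contragredient.\<close>
inductive_set weyl :: "(real ^ 'n) set \<Rightarrow> (real ^ 'n \<Rightarrow> real ^ 'n) \<Rightarrow>
    ((real ^ 'n \<Rightarrow> real ^ 'n) \<times> (real ^ 'n \<Rightarrow> real ^ 'n)) set"
  for R cor where
  weyl_id: "(id, id) \<in> weyl R cor"
| weyl_step: "(f, g) \<in> weyl R cor \<Longrightarrow> \<alpha> \<in> R \<Longrightarrow>
     (refl_X cor \<alpha> \<circ> f, refl_Lam cor \<alpha> \<circ> g) \<in> weyl R cor"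

definition dominant :: "(real ^ 'n) set \<Rightarrow> (real ^ 'n \<Rightarrow> real ^ 'n) \<Rightarrow> real ^ 'n \<Rightarrow> bool" where
  "dominant Rp cor z \<longleftrightarrow> (\<forall>\<alpha>\<in>Rp. z \<bullet> cor \<alpha> \<ge> 0)"

definition dom_pt :: "(real ^ 'n) set \<Rightarrow> (real ^ 'n) set \<Rightarrow> (real ^ 'n \<Rightarrow> real ^ 'n)
    \<Rightarrow> real ^ 'n \<Rightarrow> real ^ 'n" where
  "dom_pt R Rp cor z = (THE y. dominant Rp cor y \<and> (\<exists>w\<in>weyl R cor. y = fst w z))"

definition root_le :: "(real ^ 'n) set \<Rightarrow> real ^ 'n \<Rightarrow> real ^ 'n \<Rightarrow> bool" where
  "root_le Rp z z' \<longleftrightarrow> (\<exists>c. (\<forall>\<alpha>\<in>Rp. c \<alpha> \<ge> 0) \<and> z' - z = (\<Sum>\<alpha>\<in>Rp. c \<alpha> *\<^sub>R \<alpha>))"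

definition half_sum :: "(real ^ 'n) set \<Rightarrow> real ^ 'n" where
  "half_sum Rp = (1/2) *\<^sub>R (\<Sum>\<alpha>\<in>Rp. \<alpha>)"

text \<open>Lambda^{--}: lambda(T^{--}) (l ranges over Lambda), i.e. |alpha(t)|_L >= 1, i.e. val_L(alpha(t)) <= 0.\<close>
definition antidom_lattice :: "(real ^ 'n) set \<Rightarrow> (real ^ 'n) set" where
  "antidom_lattice Rp = {l\<in>int_pts. \<forall>\<alpha>\<in>Rp. \<alpha> \<bullet> l \<le> 0}"

text \<open>val_L(gamma_xi(w, lambda)) for d = [L:Q_p]:
  val_L(|alpha(t)|_L) = -d * val_L(alpha(t)) and val_L of the pi_L-power is
  val_L(xi(^w t)) - val_L(xi(t)).  The condition alpha not in ^{w^{-1}}Phi^+ means ^w alpha not in Phi^+.\<close>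
definition val_gamma :: "nat \<Rightarrow> (real ^ 'n) set \<Rightarrow> real ^ 'n \<Rightarrow>
    ((real ^ 'n \<Rightarrow> real ^ 'n) \<times> (real ^ 'n \<Rightarrow> real ^ 'n)) \<Rightarrow> real ^ 'n \<Rightarrow> real" where
  "val_gamma d Rp \<xi> w l =
     - real d * (\<Sum>\<alpha>\<in>{\<alpha>\<in>Rp. fst w \<alpha> \<notin> Rp}. \<alpha> \<bullet> l) + (\<xi> \<bullet> snd w l - \<xi> \<bullet> l)"

text \<open>V_R^xi; gamma^dom(lambda) = gamma(w, lambda) for any w with ^w lambda in Lambda^{--}.\<close>
definition V_xi :: "nat \<Rightarrow> (real ^ 'n) set \<Rightarrow> (real ^ 'n) set \<Rightarrow> (real ^ 'n \<Rightarrow> real ^ 'n)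
    \<Rightarrow> real ^ 'n \<Rightarrow> (real ^ 'n) set" where
  "V_xi d R Rp cor \<xi> = {z. \<forall>l\<in>int_pts. \<forall>w\<in>weyl R cor.
      snd w l \<in> antidom_lattice Rp \<longrightarrow> z \<bullet> l \<ge> val_gamma d Rp \<xi> w l}"

end

theory Submission
  imports Defs
begin

(* Put c = d eta + xi. The sum over the inversion set of w in val_L gamma_xi(w, lambda) equals
   eta(lambda) - eta(w lambda), so val_L gamma_xi(w, lambda) = c(w lambda) - c(lambda), and z lies
   in V^xi iff c(mu) <= y(w^-1 mu) for y = z + c and every integral antidominant mu = w lambda.
   For fixed mu the values y(w^-1 mu) are the values u(mu), u in the W-orbit of y; their minimum
   is y^dom(mu), since y^dom - u is a nonnegative combination of positive roots (an induction on
   the length of words in the simple reflections, using the exchange condition). So z is in V^xi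
   iff c - y^dom pairs nonpositively with every integral antidominant mu, which by Farkas' lemma
   and the density of rational points in the dual cone means y^dom <= c. *)

section \<open>Reflections and invariant forms\<close>

definition reflection :: "'a::real_inner \<Rightarrow> 'a \<Rightarrow> 'a \<Rightarrow> 'a" where
  "reflection \<alpha> \<beta> x = x - (x \<bullet> \<beta>) *\<^sub>R \<alpha>"

definition root_form :: "'a::real_inner set \<Rightarrow> 'a \<Rightarrow> 'a \<Rightarrow> real" where
  "root_form S x y = (\<Sum>b\<in>S. (x \<bullet> b) * (y \<bullet> b))"

lemma refl_X_eq_reflection: "refl_X cor a = reflection a (cor a)"
  by (simp add: fun_eq_iff refl_X_def reflection_def)

lemma refl_Lam_eq_reflection: "refl_Lam cor a = reflection (cor a) a"
  by (simp add: fun_eq_iff refl_Lam_def reflection_def inner_commute)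

lemma reflection_reflection: "\<alpha> \<bullet> \<beta> = 2 \<Longrightarrow> reflection \<alpha> \<beta> (reflection \<alpha> \<beta> x) = x"
  by (simp add: reflection_def inner_diff_left algebra_simps)

lemma reflection_self: "\<alpha> \<bullet> \<beta> = 2 \<Longrightarrow> reflection \<alpha> \<beta> \<alpha> = - \<alpha>"
  by (simp add: reflection_def scaleR_2)

lemma inner_reflection_left: "reflection \<alpha> \<beta> x \<bullet> y = x \<bullet> reflection \<beta> \<alpha> y"
  by (simp add: reflection_def inner_diff_left inner_diff_right inner_commute algebra_simps)

lemma linear_reflection: "linear (reflection \<alpha> \<beta>)"
  by (rule linearI) (simp_all add: reflection_def inner_add_left algebra_simps)

lemma root_form_commute: "root_form S x y = root_form S y x"
  by (simp add: root_form_def mult.commute)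

lemma root_form_sum_right:
  "finite A \<Longrightarrow> root_form S x (\<Sum>a\<in>A. k a *\<^sub>R h a) = (\<Sum>a\<in>A. k a * root_form S x (h a))"
  by (simp add: root_form_def inner_sum_left scaleR_sum_left sum_distrib_left sum_distrib_right
      algebra_simps sum.swap[of _ A])

lemma root_form_pos:
  assumes "finite S" "\<beta> \<in> S" "x \<bullet> \<beta> \<noteq> 0"
  shows "root_form S x x > 0"
proof -
  have "(x \<bullet> \<beta>) * (x \<bullet> \<beta>) \<le> root_form S x x"
    unfolding root_form_def by (rule member_le_sum) (use assms in auto)
  then show ?thesis using assms(3) by (smt (verit) not_real_square_gt_zero)
qed

lemma root_form_eq_0_imp_orthogonal:
  assumes "finite S" "root_form S x x = 0" "b \<in> S"
  shows "x \<bullet> b = 0"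
  using assms root_form_pos by fastforce

lemma root_form_reflection_invariant:
  assumes "\<alpha> \<bullet> \<beta> = 2" "reflection \<beta> \<alpha> ` S = S"
  shows "root_form S (reflection \<alpha> \<beta> x) (reflection \<alpha> \<beta> y) = root_form S x y"
proof -
  have "inj_on (reflection \<beta> \<alpha>) S"
    by (rule inj_onI) (metis assms(1) inner_commute reflection_reflection)
  then have "root_form S x y = (\<Sum>b\<in>S. (x \<bullet> reflection \<beta> \<alpha> b) * (y \<bullet> reflection \<beta> \<alpha> b))"
    unfolding root_form_def by (subst (1) assms(2)[symmetric]) (simp add: sum.reindex)
  then show ?thesis by (simp add: root_form_def inner_reflection_left)
qed

lemma inner_eq_root_form_quotient:
  assumes "\<alpha> \<bullet> \<beta> = 2" "reflection \<beta> \<alpha> ` S = S" "finite S" "\<beta> \<in> S"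
  shows "x \<bullet> \<beta> = 2 * root_form S x \<alpha> / root_form S \<alpha> \<alpha>"
proof -
  let ?s = "reflection \<alpha> \<beta>"
  have "root_form S (?s x) \<alpha> = root_form S (?s x) (?s (- \<alpha>))"
    using assms(1) linear_reflection[of \<alpha> \<beta>] by (simp add: reflection_self linear_neg)
  also have "\<dots> = root_form S x (- \<alpha>)"
    by (rule root_form_reflection_invariant[OF assms(1,2)])
  also have "\<dots> = - root_form S x \<alpha>"
    by (simp add: root_form_def sum_negf)
  finally have "root_form S (?s x) \<alpha> = - root_form S x \<alpha>" .
  moreover have "root_form S (?s x) \<alpha> = root_form S x \<alpha> - (x \<bullet> \<beta>) * root_form S \<alpha> \<alpha>"
    by (simp add: root_form_def reflection_def inner_diff_left sum_subtractf sum_distrib_left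
        algebra_simps)
  moreover have "root_form S \<alpha> \<alpha> > 0"
    using root_form_pos[OF assms(3,4)] assms(1) by simp
  ultimately show ?thesis by (simp add: field_simps)
qed

section \<open>Finitely generated cones\<close>

lemma convex_cone_sum_mem:
  assumes "convex_cone T" "finite A" "A \<subseteq> T" "\<And>a. a \<in> A \<Longrightarrow> 0 \<le> k a"
  shows "(\<Sum>a\<in>A. k a *\<^sub>R a) \<in> T"
  using assms(2-4)
proof (induction A rule: finite_induct)
  case empty
  then show ?case using convex_cone_contains_0[OF assms(1)] by simp
next
  case (insert a A)
  then show ?case by (simp add: convex_cone_add[OF assms(1)] convex_cone_scaleR[OF assms(1)])
qed

lemma convex_cone_hull_finite:
  fixes S :: "'a::real_vector set"
  assumes "finite S"
  shows "convex_cone hull S = {x. \<exists>k. (\<forall>a\<in>S. 0 \<le> k a) \<and> x = (\<Sum>a\<in>S. k a *\<^sub>R a)}"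
    (is "_ = ?K")
proof (rule hull_unique)
  show "S \<subseteq> ?K"
  proof
    fix x assume "x \<in> S"
    have "(\<Sum>a\<in>S. (if a = x then 1 else 0) *\<^sub>R a) = (\<Sum>a\<in>S. if a = x then a else 0)"
      by (rule sum.cong) auto
    then have "x = (\<Sum>a\<in>S. (if a = x then 1 else 0) *\<^sub>R a)"
      using assms \<open>x \<in> S\<close> by simp
    then show "x \<in> ?K" by (intro CollectI exI[of _ "\<lambda>a. if a = x then 1 else 0"]) auto
  qed
  show "convex_cone ?K"
    unfolding convex_cone_iff
  proof (intro conjI ballI allI impI)
    show "0 \<in> ?K" by (intro CollectI exI[of _ "\<lambda>a. 0"]) auto
  next
    fix x y assume "x \<in> ?K" "y \<in> ?K"
    then obtain k l where "\<forall>a\<in>S. 0 \<le> k a" "x = (\<Sum>a\<in>S. k a *\<^sub>R a)"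
      "\<forall>a\<in>S. 0 \<le> l a" "y = (\<Sum>a\<in>S. l a *\<^sub>R a)" by blast
    then show "x + y \<in> ?K"
      by (intro CollectI exI[of _ "\<lambda>a. k a + l a"]) (auto simp: scaleR_add_left sum.distrib)
  next
    fix x and c :: real assume "x \<in> ?K" "0 \<le> c"
    then obtain k where "\<forall>a\<in>S. 0 \<le> k a" "x = (\<Sum>a\<in>S. k a *\<^sub>R a)" by blast
    with \<open>0 \<le> c\<close> show "c *\<^sub>R x \<in> ?K"
      by (intro CollectI exI[of _ "\<lambda>a. c * k a"]) (auto simp: scaleR_sum_right)
  qed
  show "?K \<subseteq> T" if "S \<subseteq> T" "convex_cone T" for T
    using convex_cone_sum_mem[OF that(2) assms that(1)] by blast
qed

lemma root_le_iff_convex_cone_hull: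
  "finite S \<Longrightarrow> root_le S x y \<longleftrightarrow> y - x \<in> convex_cone hull S"
  by (simp add: root_le_def convex_cone_hull_finite)

lemma convex_cone_hull_pointed:
  fixes S :: "'a::real_inner set"
  assumes "finite S" "\<And>a. a \<in> S \<Longrightarrow> 0 < v \<bullet> a"
    and "p \<in> convex_cone hull S" "- p \<in> convex_cone hull S"
  shows "p = 0"
proof -
  have "convex_cone hull S \<subseteq> {x. 0 \<le> v \<bullet> x}"
    using assms(2) by (intro hull_minimal convex_cone_halfspace_ge) (auto intro: less_imp_le)
  then have "0 \<le> v \<bullet> p" "0 \<le> v \<bullet> (- p)"
    using assms(3,4) by (simp_all add: subset_iff del: inner_minus_right)
  then have "v \<bullet> p = 0" by simp
  moreover obtain k where k: "\<forall>a\<in>S. 0 \<le> k a" "p = (\<Sum>a\<in>S. k a *\<^sub>R a)"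
    using assms(3) unfolding convex_cone_hull_finite[OF assms(1)] by blast
  ultimately have "(\<Sum>a\<in>S. k a * (v \<bullet> a)) = 0"
    by (simp add: inner_sum_right)
  moreover have "\<forall>a\<in>S. 0 \<le> k a * (v \<bullet> a)"
    using k(1) assms(2) by (simp add: less_imp_le)
  ultimately have "\<forall>a\<in>S. k a * (v \<bullet> a) = 0"
    using sum_nonneg_eq_0_iff[OF assms(1), of "\<lambda>a. k a * (v \<bullet> a)"] by simp
  then have "\<forall>a\<in>S. k a = 0"
    using assms(2) by (metis less_irrefl mult_eq_0_iff)
  then show "p = 0" by (simp add: k(2))
qed

lemma convex_cone_hull_eq_double_dual:
  fixes S :: "'a::euclidean_space set"
  assumes "finite S"
  shows "convex_cone hull S = {p. \<forall>h. (\<forall>a\<in>S. 0 \<le> a \<bullet> h) \<longrightarrow> 0 \<le> p \<bullet> h}"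
    (is "_ = ?D")
proof
  show "convex_cone hull S \<subseteq> ?D"
  proof (rule hull_minimal)
    show "convex_cone ?D"
      unfolding convex_cone_iff by (simp add: inner_add_left)
  qed auto
  show "?D \<subseteq> convex_cone hull S"
  proof
    fix p assume p: "p \<in> ?D"
    show "p \<in> convex_cone hull S"
    proof (rule ccontr)
      assume "p \<notin> convex_cone hull S"
      then obtain u b where ub: "u \<bullet> p < b" "\<And>x. x \<in> convex_cone hull S \<Longrightarrow> b < u \<bullet> x"
        using separating_hyperplane_closed_point[OF convex_convex_cone_hull
            closed_convex_cone_hull[OF assms]] by blast
      have "b < 0" using ub(2)[OF convex_cone_hull_contains_0] by simp
      have "0 \<le> u \<bullet> x" if "x \<in> convex_cone hull S" for x
      proof (rule ccontr)
        assume "\<not> 0 \<le> u \<bullet> x"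
        then have "(b / (u \<bullet> x)) *\<^sub>R x \<in> convex_cone hull S"
          using \<open>b < 0\<close> that by (simp add: convex_cone_hull_mul divide_nonpos_neg)
        from ub(2)[OF this] \<open>\<not> 0 \<le> u \<bullet> x\<close> show False by simp
      qed
      then have "\<forall>a\<in>S. 0 \<le> a \<bullet> u"
        using hull_inc by (metis inner_commute)
      then have "0 \<le> p \<bullet> u" using p by blast
      then show False using ub(1) \<open>b < 0\<close> by (simp add: inner_commute)
    qed
  qed
qed

lemma sum_Basis_int_pts:
  assumes "f \<in> Basis \<rightarrow> \<int>"
  shows "(\<Sum>i\<in>Basis. f i *\<^sub>R i :: real ^ 'n) \<in> int_pts"
  unfolding int_pts_def
proof (intro CollectI allI)
  fix j :: 'n
  have b: "axis j (1::real) \<in> Basis" by simp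
  have "(\<Sum>i\<in>Basis. f i *\<^sub>R i :: real ^ 'n) $ j = (\<Sum>i\<in>Basis. f i *\<^sub>R i) \<bullet> axis j 1"
    by (rule cart_eq_inner_axis)
  also have "\<dots> = (\<Sum>i\<in>Basis. (i \<bullet> axis j 1) * f i)"
    by (simp only: inner_sum_left inner_scaleR_left mult.commute)
  also have "\<dots> = f (axis j 1)" using b by (rule sum_inner_Basis_eq)
  finally show "(\<Sum>i\<in>Basis. f i *\<^sub>R i :: real ^ 'n) $ j \<in> \<int>" using assms b by auto
qed

text \<open>The dyadic points are dense in the dual cone since it has interior, and a dyadic point
  is an integral one up to a positive factor.\<close>
lemma dual_cone_nonneg_of_integral:
  fixes S :: "(real ^ 'n) set"
  assumes "finite S" "\<And>a. a \<in> S \<Longrightarrow> 0 < a \<bullet> v"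
    and p: "\<forall>h\<in>int_pts. (\<forall>a\<in>S. 0 \<le> a \<bullet> h) \<longrightarrow> 0 \<le> p \<bullet> h"
  shows "{h. \<forall>a\<in>S. 0 \<le> a \<bullet> h} \<subseteq> {h. 0 \<le> p \<bullet> h}"
proof -
  let ?C = "{h. \<forall>a\<in>S. 0 \<le> a \<bullet> h}"
  let ?DY = "\<Union>k. \<Union>f\<in>Basis \<rightarrow> \<int>. {\<Sum>i\<in>Basis. (f i / 2 ^ k) *\<^sub>R i :: real ^ 'n}"
  have "?C = (\<Inter>a\<in>S. {h. a \<bullet> h \<ge> 0})" by auto
  then have "convex ?C"
    by (simp add: convex_INT convex_halfspace_ge)
  moreover have "v \<in> interior ?C"
  proof (rule interiorI[of "\<Inter>a\<in>S. {h. 0 < a \<bullet> h}"])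
    show "open (\<Inter>a\<in>S. {h. 0 < a \<bullet> h})"
      using assms(1) by (intro open_INT) (auto simp: open_halfspace_gt)
  qed (use assms(2) in \<open>auto intro: less_imp_le\<close>)
  ultimately have "closure (?C \<inter> ?DY) = closure ?C"
    by (intro closure_dyadic_rationals_in_convex_set) auto
  moreover have "?C \<inter> ?DY \<subseteq> {h. 0 \<le> p \<bullet> h}"
  proof
    fix q assume "q \<in> ?C \<inter> ?DY"
    then obtain k f where q: "q \<in> ?C" "f \<in> Basis \<rightarrow> \<int>" "q = (\<Sum>i\<in>Basis. (f i / 2 ^ k) *\<^sub>R i)"
      by blast
    have "(2::real) ^ k *\<^sub>R q = (\<Sum>i\<in>Basis. f i *\<^sub>R i)"
      by (simp add: q(3) scaleR_sum_right)
    then have "(2::real) ^ k *\<^sub>R q \<in> int_pts"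
      using sum_Basis_int_pts[OF q(2)] by simp
    moreover have "(2::real) ^ k *\<^sub>R q \<in> ?C"
      using q(1) by simp
    ultimately have "0 \<le> p \<bullet> ((2::real) ^ k *\<^sub>R q)"
      using p by blast
    then show "q \<in> {h. 0 \<le> p \<bullet> h}"
      using zero_le_scaleR_iff[of "(2::real) ^ k" "p \<bullet> q"] by simp
  qed
  then have "closure (?C \<inter> ?DY) \<subseteq> {h. 0 \<le> p \<bullet> h}"
    using closed_halfspace_ge[where a = p and b = 0]
    by (intro closure_minimal) (simp_all add: inner_commute)
  ultimately show ?thesis using closure_subset[of ?C] by (simp only:)
qed

lemma convex_cone_hull_eq_integral_dual:
  fixes S :: "(real ^ 'n) set"
  assumes "finite S" "\<And>a. a \<in> S \<Longrightarrow> 0 < a \<bullet> v"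
  shows "convex_cone hull S = {p. \<forall>h\<in>int_pts. (\<forall>a\<in>S. 0 \<le> a \<bullet> h) \<longrightarrow> 0 \<le> p \<bullet> h}"
  unfolding convex_cone_hull_eq_double_dual[OF assms(1)]
  using dual_cone_nonneg_of_integral[OF assms] by (intro Collect_cong iffI) blast+

section \<open>Root data with a positive system\<close>

locale positive_root_datum =
  fixes R :: "(real ^ 'n) set" and cor :: "real ^ 'n \<Rightarrow> real ^ 'n"
    and Rp :: "(real ^ 'n) set" and v :: "real ^ 'n"
  assumes root_datum: "reduced_root_datum R cor"
    and inner_v_root_nonzero: "\<And>a. a \<in> R \<Longrightarrow> v \<bullet> a \<noteq> 0"
    and positive_roots_eq: "Rp = {a \<in> R. 0 < v \<bullet> a}"
begin

abbreviation "sX \<equiv> refl_X cor"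
abbreviation "sL \<equiv> refl_Lam cor"
abbreviation "W \<equiv> weyl R cor"

lemma finite_roots: "finite R"
  and roots_int_pts: "R \<subseteq> int_pts"
  and coroots_int_pts: "cor ` R \<subseteq> int_pts"
  and inner_coroot_self: "a \<in> R \<Longrightarrow> a \<bullet> cor a = 2"
  and refl_X_roots: "a \<in> R \<Longrightarrow> sX a ` R = R"
  and refl_Lam_coroots: "a \<in> R \<Longrightarrow> sL a ` cor ` R = cor ` R"
  and roots_reduced: "a \<in> R \<Longrightarrow> c *\<^sub>R a \<in> R \<Longrightarrow> c = 1 \<or> c = -1"
  using root_datum unfolding reduced_root_datum_def by blast+

lemma refl_X_refl_X: "a \<in> R \<Longrightarrow> sX a (sX a x) = x"
  by (simp add: refl_X_eq_reflection reflection_reflection inner_coroot_self)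

lemma refl_Lam_refl_Lam: "a \<in> R \<Longrightarrow> sL a (sL a q) = q"
  by (simp add: refl_Lam_eq_reflection reflection_reflection inner_coroot_self inner_commute)

lemma inner_refl_X: "sX a x \<bullet> q = x \<bullet> sL a q"
  by (simp add: refl_X_eq_reflection refl_Lam_eq_reflection inner_reflection_left)

lemma refl_X_self: "a \<in> R \<Longrightarrow> sX a a = - a"
  by (simp add: refl_X_eq_reflection reflection_self inner_coroot_self)

lemma linear_refl_X: "linear (sX a)"
  by (simp add: refl_X_eq_reflection linear_reflection)

lemma uminus_root: "a \<in> R \<Longrightarrow> - a \<in> R"
  by (metis image_eqI refl_X_roots refl_X_self)

lemma root_form_coroots_refl_X:
  "a \<in> R \<Longrightarrow> root_form (cor ` R) (sX a x) (sX a y) = root_form (cor ` R) x y"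
  by (simp add: refl_X_eq_reflection root_form_reflection_invariant inner_coroot_self
      refl_Lam_coroots flip: refl_Lam_eq_reflection)

lemma inner_coroot_eq:
  "a \<in> R \<Longrightarrow> x \<bullet> cor a = 2 * root_form (cor ` R) x a / root_form (cor ` R) a a"
  by (rule inner_eq_root_form_quotient)
    (simp_all add: inner_coroot_self refl_Lam_coroots finite_roots flip: refl_Lam_eq_reflection)

lemma inner_root_eq:
  "a \<in> R \<Longrightarrow> q \<bullet> a = 2 * root_form R q (cor a) / root_form R (cor a) (cor a)"
  by (rule inner_eq_root_form_quotient)
    (simp_all add: inner_coroot_self inner_commute refl_X_roots finite_roots
      flip: refl_X_eq_reflection)

lemma root_form_coroots_pos: "a \<in> R \<Longrightarrow> 0 < root_form (cor ` R) a a"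
  by (rule root_form_pos[of _ "cor a"]) (simp_all add: finite_roots inner_coroot_self)

lemma coroot_refl_X:
  assumes "a \<in> R" "b \<in> R"
  shows "cor (sX a b) = sL a (cor b)"
proof -
  have "sX a b \<in> R" using assms refl_X_roots by blast
  have "x \<bullet> cor (sX a b) = x \<bullet> sL a (cor b)" for x
  proof -
    have "x \<bullet> cor (sX a b) = 2 * root_form (cor ` R) (sX a (sX a x)) (sX a b) /
        root_form (cor ` R) (sX a b) (sX a b)"
      using inner_coroot_eq[OF \<open>sX a b \<in> R\<close>] assms(1) by (simp add: refl_X_refl_X)
    also have "\<dots> = sX a x \<bullet> cor b"
      using assms by (simp add: root_form_coroots_refl_X inner_coroot_eq)
    finally show ?thesis by (simp add: inner_refl_X)
  qed
  then show ?thesis by (subst vector_eq_ldot[symmetric]) blast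
qed

lemma coroot_uminus: "b \<in> R \<Longrightarrow> cor (- b) = - cor b"
  by (metis coroot_refl_X refl_X_self refl_Lam_eq_reflection reflection_self inner_coroot_self
      inner_commute)

lemma refl_X_uminus: "a \<in> R \<Longrightarrow> sX (- a) = sX a"
  by (simp add: fun_eq_iff refl_X_def coroot_uminus)

lemma weyl_refl: "a \<in> R \<Longrightarrow> (sX a, sL a) \<in> W"
  using weyl_step[OF weyl_id, of a] by simp

lemma weyl_comp: "(f, g) \<in> W \<Longrightarrow> (f', g') \<in> W \<Longrightarrow> (f \<circ> f', g \<circ> g') \<in> W"
proof (induction rule: weyl.induct)
  case (weyl_step f g a)
  from weyl.weyl_step[OF weyl_step.IH[OF weyl_step.prems] weyl_step.hyps(2)]
  show ?case by (simp only: comp_assoc)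
qed simp

lemma weyl_inverse:
  "(f, g) \<in> W \<Longrightarrow> \<exists>f' g'. (f', g') \<in> W \<and> (\<forall>x. f' (f x) = x) \<and> (\<forall>q. g (g' q) = q)"
proof (induction rule: weyl.induct)
  case weyl_id
  then show ?case using weyl.weyl_id by fastforce
next
  case (weyl_step f g a)
  then obtain f' g' where fg': "(f', g') \<in> W" "\<forall>x. f' (f x) = x" "\<forall>q. g (g' q) = q" by blast
  have "(f' \<circ> sX a, g' \<circ> sL a) \<in> W"
    by (rule weyl_comp[OF fg'(1) weyl_refl[OF weyl_step(2)]])
  moreover have "\<forall>x. (f' \<circ> sX a) ((sX a \<circ> f) x) = x" "\<forall>q. (sL a \<circ> g) ((g' \<circ> sL a) q) = q"
    using fg'(2,3) weyl_step(2) by (simp_all add: refl_X_refl_X refl_Lam_refl_Lam)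
  ultimately show ?case by blast
qed

lemma weyl_inj: "(f, g) \<in> W \<Longrightarrow> inj f"
  by (metis inj_on_inverseI weyl_inverse)

lemma weyl_inner: "(f, g) \<in> W \<Longrightarrow> f x \<bullet> g q = x \<bullet> q"
  by (induction rule: weyl.induct) (simp_all add: inner_refl_X refl_Lam_refl_Lam)

lemma weyl_linear: "(f, g) \<in> W \<Longrightarrow> linear f"
proof (induction rule: weyl.induct)
  case weyl_id
  then show ?case by (simp only: linear_id)
next
  case (weyl_step f g a)
  from weyl_step.IH show ?case by (rule linear_compose[OF _ linear_refl_X])
qed

lemma weyl_roots: "(f, g) \<in> W \<Longrightarrow> f ` R = R"
  by (induction rule: weyl.induct)
    (simp_all only: id_def image_ident image_comp[symmetric] refl_X_roots)

lemma weyl_coroots: "(f, g) \<in> W \<Longrightarrow> g ` cor ` R = cor ` R"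
  by (induction rule: weyl.induct)
    (simp_all only: id_def image_ident image_comp[symmetric] refl_Lam_coroots)

lemma weyl_coroot: "(f, g) \<in> W \<Longrightarrow> b \<in> R \<Longrightarrow> cor (f b) = g (cor b)"
proof (induction rule: weyl.induct)
  case (weyl_step f g a)
  then have "f b \<in> R" using weyl_roots by blast
  with weyl_step show ?case by (simp add: coroot_refl_X)
qed simp

lemma weyl_minus_in_span: "(f, g) \<in> W \<Longrightarrow> f x - x \<in> span R"
proof (induction rule: weyl.induct)
  case (weyl_step f g a)
  have "(sX a \<circ> f) x - x = (f x - x) - (f x \<bullet> cor a) *\<^sub>R a"
    by (simp add: refl_X_def)
  then show ?case
    using weyl_step by (metis span_diff span_scale span_base)
qed (simp add: span_zero)

lemma weyl_int_pts: "(f, g) \<in> W \<Longrightarrow> l \<in> int_pts \<Longrightarrow> g l \<in> int_pts"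
proof (induction rule: weyl.induct)
  case (weyl_step f g a)
  then have "a \<bullet> g l \<in> \<int>" "cor a \<in> int_pts" "g l \<in> int_pts"
    using roots_int_pts coroots_int_pts
    by (auto simp: int_pts_def inner_vec_def inner_real_def intro!: Ints_sum Ints_mult)
  then show ?case
    by (simp add: refl_Lam_def int_pts_def)
qed simp

lemma weyl_conj: "(f, g) \<in> W \<Longrightarrow> b \<in> R \<Longrightarrow> f \<circ> sX b = sX (f b) \<circ> f"
  by (simp add: fun_eq_iff refl_X_def weyl_coroot weyl_inner linear_diff linear_scale weyl_linear)

text \<open>Through the invariant form on the cocharacter side, \<open>\<delta>\<close> is represented by a vector
  \<open>u\<close>, and the hypothesis forces \<open>root_form R u u = 0\<close>.\<close>
lemma span_roots_orthogonal_coroots: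
  assumes "\<delta> \<in> span R" "\<And>b. b \<in> R \<Longrightarrow> \<delta> \<bullet> cor b = 0"
  shows "\<delta> = 0"
proof -
  obtain c where \<delta>: "\<delta> = (\<Sum>a\<in>R. c a *\<^sub>R a)"
    using assms(1) finite_roots span_finite by blast
  define u where "u = (\<Sum>a\<in>R. (c a * 2 / root_form R (cor a) (cor a)) *\<^sub>R cor a)"
  have \<delta>_u: "q \<bullet> \<delta> = root_form R q u" for q
    by (simp add: \<delta> u_def inner_sum_right root_form_sum_right finite_roots inner_root_eq
        mult.commute mult.left_commute)
  have "root_form R u u = 0"
    using assms(2) \<delta>_u[of "cor _"]
    by (simp add: u_def root_form_sum_right finite_roots root_form_commute inner_commute)
  then have "u \<bullet> b = 0" if "b \<in> R" for b
    using root_form_eq_0_imp_orthogonal[OF finite_roots _ that] by simp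
  then have "\<delta> \<bullet> \<delta> = 0"
    using \<delta>_u[of \<delta>] by (simp add: root_form_def)
  then show ?thesis by simp
qed

definition weyl_orbit :: "real ^ 'n \<Rightarrow> (real ^ 'n) set" where
  "weyl_orbit z = {fst w z | w. w \<in> W}"

lemma weyl_orbit_iff: "x \<in> weyl_orbit z \<longleftrightarrow> (\<exists>f g. (f, g) \<in> W \<and> x = f z)"
  by (auto simp: weyl_orbit_def)

lemma self_in_weyl_orbit: "z \<in> weyl_orbit z"
  using weyl_id by (force simp: weyl_orbit_iff)

lemma refl_X_in_weyl_orbit: "x \<in> weyl_orbit z \<Longrightarrow> a \<in> R \<Longrightarrow> sX a x \<in> weyl_orbit z"
  unfolding weyl_orbit_iff by (metis comp_apply weyl_step)

text \<open>A point of the orbit is determined by its pairings with the coroots, and these take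
  values in the finite set of pairings of \<open>z\<close> with coroots.\<close>
lemma finite_weyl_orbit: "finite (weyl_orbit z)"
proof -
  let ?T = "(\<lambda>c. z \<bullet> c) ` cor ` R"
  let ?pairings = "\<lambda>x. restrict (\<lambda>b. x \<bullet> cor b) R"
  have maps: "?pairings ` weyl_orbit z \<subseteq> PiE R (\<lambda>_. ?T)"
  proof (intro image_subsetI restrict_PiE_iff[THEN iffD2] ballI)
    fix x b assume "x \<in> weyl_orbit z" "b \<in> R"
    then obtain f g where fg: "(f, g) \<in> W" "x = f z" by (auto simp: weyl_orbit_iff)
    then obtain f' g' where "(f', g') \<in> W" "\<forall>x. f' (f x) = x" using weyl_inverse by blast
    then have "x \<bullet> cor b = z \<bullet> g' (cor b)"
      using weyl_inner[of f' g' x "cor b"] fg(2) by simp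
    moreover have "g' (cor b) \<in> cor ` R"
      using weyl_coroots[OF \<open>(f', g') \<in> W\<close>] \<open>b \<in> R\<close> by blast
    ultimately show "x \<bullet> cor b \<in> ?T" by (metis image_eqI)
  qed
  have inj: "inj_on ?pairings (weyl_orbit z)"
  proof (rule inj_onI)
    fix x y assume "x \<in> weyl_orbit z" "y \<in> weyl_orbit z" and eq: "?pairings x = ?pairings y"
    then obtain f g f2 g2 where fg: "(f, g) \<in> W" "x = f z" and fg2: "(f2, g2) \<in> W" "y = f2 z"
      by (auto simp: weyl_orbit_iff)
    then have "x - y \<in> span R"
      using span_diff[OF weyl_minus_in_span[OF fg(1), of z] weyl_minus_in_span[OF fg2(1), of z]]
      by simp
    moreover have "(x - y) \<bullet> cor b = 0" if "b \<in> R" for b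
      using fun_cong[OF eq, of b] that by (simp add: inner_diff_left)
    ultimately show "x = y"
      using span_roots_orthogonal_coroots by fastforce
  qed
  show ?thesis
    by (rule inj_on_finite[OF inj maps]) (simp add: finite_PiE finite_roots)
qed

lemma positive_roots_subset: "Rp \<subseteq> R"
  and finite_positive_roots: "finite Rp"
  and inner_v_positive_root: "a \<in> Rp \<Longrightarrow> 0 < v \<bullet> a"
  using finite_roots by (auto simp: positive_roots_eq)

lemma uminus_positive_root: "a \<in> Rp \<Longrightarrow> - a \<notin> Rp"
  by (simp add: positive_roots_eq)

lemma uminus_nonpositive_root: "a \<in> R \<Longrightarrow> a \<notin> Rp \<Longrightarrow> - a \<in> Rp"
  using inner_v_root_nonzero uminus_root by (force simp: positive_roots_eq)

lemma ex_dominant_in_weyl_orbit: "\<exists>x\<in>weyl_orbit z. dominant Rp cor x"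
proof -
  obtain x where x: "x \<in> weyl_orbit z" "\<And>y. y \<in> weyl_orbit z \<Longrightarrow> v \<bullet> y \<le> v \<bullet> x"
    using ex_is_arg_min_if_finite[OF finite_weyl_orbit, of z "\<lambda>x. - (v \<bullet> x)"] self_in_weyl_orbit
    by (fastforce simp: is_arg_min_def)
  have "0 \<le> x \<bullet> cor a" if "a \<in> Rp" for a
  proof (rule ccontr)
    assume "\<not> 0 \<le> x \<bullet> cor a"
    moreover have "v \<bullet> sX a x = v \<bullet> x - (x \<bullet> cor a) * (v \<bullet> a)"
      by (simp add: refl_X_def inner_diff_right)
    moreover have "v \<bullet> sX a x \<le> v \<bullet> x"
      using x positive_roots_subset that by (blast intro: refl_X_in_weyl_orbit)
    ultimately show False
      using inner_v_positive_root[OF that] mult_neg_pos[of "x \<bullet> cor a" "v \<bullet> a"] by linarith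
  qed
  with x(1) show ?thesis by (auto simp: dominant_def)
qed

lemma bij_betw_positive_part:
  assumes "(f, g) \<in> W"
  shows "bij_betw (\<lambda>b. if f b \<in> Rp then f b else - f b) Rp Rp"
proof -
  let ?\<sigma> = "\<lambda>b. if f b \<in> Rp then f b else - f b"
  have "f b \<in> R" if "b \<in> Rp" for b
    using weyl_roots[OF assms] positive_roots_subset that by blast
  then have maps: "?\<sigma> ` Rp \<subseteq> Rp"
    using uminus_nonpositive_root by auto
  have inj: "inj_on ?\<sigma> Rp"
  proof (rule inj_onI)
    fix b b' assume b: "b \<in> Rp" "b' \<in> Rp" "?\<sigma> b = ?\<sigma> b'"
    have f_uminus: "f (- x) = - f x" for x by (rule linear_neg[OF weyl_linear[OF assms]])
    from b(3) have "f b = f b' \<or> f b = - f b'"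
      by (auto split: if_splits) (metis minus_minus)
    then have "f b = f b' \<or> f b = f (- b')"
      by (simp add: f_uminus)
    then have "b = b' \<or> b = - b'" using weyl_inj[OF assms] by (auto dest: injD)
    then show "b = b'" using b(1,2) uminus_positive_root by blast
  qed
  show ?thesis
    unfolding bij_betw_def using endo_inj_surj[OF finite_positive_roots maps inj] inj by blast
qed

lemma sum_inversions:
  assumes "(f, g) \<in> W"
  shows "(\<Sum>a\<in>{a\<in>Rp. f a \<notin> Rp}. a \<bullet> l) = half_sum Rp \<bullet> l - half_sum Rp \<bullet> g l"
proof -
  let ?I = "{a\<in>Rp. f a \<notin> Rp}"
  have "(\<Sum>c\<in>Rp. c \<bullet> g l) = (\<Sum>b\<in>Rp. (if f b \<in> Rp then f b else - f b) \<bullet> g l)"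
    by (rule sum.reindex_bij_betw[OF bij_betw_positive_part[OF assms], symmetric])
  also have "\<dots> = (\<Sum>b\<in>Rp. if f b \<in> Rp then b \<bullet> l else - (b \<bullet> l))"
    by (rule sum.cong) (simp_all add: weyl_inner[OF assms])
  also have "\<dots> = (\<Sum>b\<in>Rp. b \<bullet> l) - 2 * (\<Sum>b\<in>?I. b \<bullet> l)"
  proof -
    have "Rp \<inter> {b. f b \<in> Rp} = Rp - ?I" "Rp \<inter> - {b. f b \<in> Rp} = ?I" by auto
    moreover have "(\<Sum>b\<in>Rp - ?I. b \<bullet> l) = (\<Sum>b\<in>Rp. b \<bullet> l) - (\<Sum>b\<in>?I. b \<bullet> l)"
      by (rule sum_diff) (auto simp: finite_positive_roots)
    ultimately show ?thesis
      by (simp add: sum.If_cases finite_positive_roots sum_negf)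
  qed
  finally have "(\<Sum>c\<in>Rp. c \<bullet> g l) = (\<Sum>b\<in>Rp. b \<bullet> l) - 2 * (\<Sum>b\<in>?I. b \<bullet> l)" .
  moreover have half_sum: "half_sum Rp \<bullet> q = (\<Sum>b\<in>Rp. b \<bullet> q) / 2" for q
    by (simp add: half_sum_def inner_sum_left)
  ultimately show ?thesis
    using half_sum[of l] half_sum[of "g l"] by linarith
qed

end

section \<open>Simple roots\<close>

locale simple_roots = positive_root_datum +
  fixes D
  assumes simple_roots_subset: "D \<subseteq> Rp"
    and positive_roots_in_cone: "Rp \<subseteq> convex_cone hull D"
    and simple_roots_card_min:
      "\<And>D'. D' \<subseteq> Rp \<Longrightarrow> Rp \<subseteq> convex_cone hull D' \<Longrightarrow> card D \<le> card D'"
begin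

lemma finite_simple_roots: "finite D"
  using simple_roots_subset finite_positive_roots finite_subset by blast

lemma simple_root_root: "a \<in> D \<Longrightarrow> a \<in> R"
  using simple_roots_subset positive_roots_subset by blast

lemma positive_root_expansion:
  "b \<in> Rp \<Longrightarrow> \<exists>k. (\<forall>a\<in>D. 0 \<le> k a) \<and> b = (\<Sum>a\<in>D. k a *\<^sub>R a)"
  using positive_roots_in_cone convex_cone_hull_finite[OF finite_simple_roots] by blast

lemma simple_root_not_in_cone: "a \<in> D \<Longrightarrow> a \<notin> convex_cone hull (D - {a})"
proof
  assume a: "a \<in> D" "a \<in> convex_cone hull (D - {a})"
  then have "D \<subseteq> convex_cone hull (D - {a})"
    by (metis hull_inc insert_Diff insert_subset subsetI)
  then have "convex_cone hull D \<subseteq> convex_cone hull (D - {a})"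
    by (intro hull_minimal convex_cone_convex_cone_hull)
  then have "card D \<le> card (D - {a})"
    using simple_roots_card_min simple_roots_subset positive_roots_in_cone by blast
  then show False
    using a(1) finite_simple_roots card_Diff1_less by fastforce
qed

text \<open>\<open>D\<close> is not known to be linearly independent; this weaker statement replaces the
  uniqueness of coefficients.\<close>
lemma simple_combination_not_multiple:
  assumes "a \<in> D" "\<forall>x\<in>D. 0 \<le> n x" "g \<in> D" "g \<noteq> a" "0 < n g"
  shows "(\<Sum>x\<in>D. n x *\<^sub>R x) \<noteq> t *\<^sub>R a"
proof
  assume "(\<Sum>x\<in>D. n x *\<^sub>R x) = t *\<^sub>R a"
  then have rest: "(\<Sum>x\<in>D - {a}. n x *\<^sub>R x) = (t - n a) *\<^sub>R a"
    using sum.remove[OF finite_simple_roots assms(1), of "\<lambda>x. n x *\<^sub>R x"]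
    by (simp add: algebra_simps)
  show False
  proof (cases "t - n a \<le> 0")
    case True
    have pos: "0 < v \<bullet> x" if "x \<in> D" for x
      using that simple_roots_subset inner_v_positive_root by blast
    have "n g * (v \<bullet> g) \<le> (\<Sum>x\<in>D - {a}. n x * (v \<bullet> x))"
      using assms pos finite_simple_roots
      by (intro member_le_sum) (auto intro: mult_nonneg_nonneg less_imp_le)
    moreover have "0 < n g * (v \<bullet> g)" using assms(3,5) pos by simp
    moreover have "(t - n a) * (v \<bullet> a) \<le> 0"
      using True pos[OF assms(1)] by (simp add: mult_nonpos_nonneg)
    ultimately show False
      using arg_cong[OF rest, of "\<lambda>y. v \<bullet> y"] by (simp add: inner_sum_right)
  next
    case False
    have "a = (1 / (t - n a)) *\<^sub>R (\<Sum>x\<in>D - {a}. n x *\<^sub>R x)"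
      using rest False by simp
    also have "\<dots> = (\<Sum>x\<in>D - {a}. (n x / (t - n a)) *\<^sub>R x)"
      by (simp add: scaleR_sum_right)
    also have "\<dots> \<in> convex_cone hull (D - {a})"
      using False assms(2) finite_simple_roots
      by (intro convex_cone_sum_mem convex_cone_convex_cone_hull hull_subset) auto
    finally show False using simple_root_not_in_cone[OF assms(1)] by blast
  qed
qed

lemma refl_X_simple_positive:
  assumes a: "a \<in> D" and b: "b \<in> Rp" "b \<noteq> a"
  shows "sX a b \<in> Rp"
proof (rule ccontr)
  assume "sX a b \<notin> Rp"
  have "a \<in> R" "b \<in> R" using a b simple_root_root positive_roots_subset by auto
  obtain k where k: "\<forall>x\<in>D. 0 \<le> k x" "b = (\<Sum>x\<in>D. k x *\<^sub>R x)"
    using positive_root_expansion[OF b(1)] by blast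
  have "- sX a b \<in> Rp"
    using uminus_nonpositive_root \<open>sX a b \<notin> Rp\<close> refl_X_roots \<open>a \<in> R\<close> \<open>b \<in> R\<close> by blast
  then obtain m where m: "\<forall>x\<in>D. 0 \<le> m x" "- sX a b = (\<Sum>x\<in>D. m x *\<^sub>R x)"
    using positive_root_expansion by blast
  obtain g where g: "g \<in> D" "g \<noteq> a" "0 < k g"
  proof (rule ccontr)
    assume "\<not> thesis"
    then have "\<forall>x\<in>D - {a}. k x = 0" using k(1) that by force
    then have "b = k a *\<^sub>R a"
      using k(2) sum.remove[OF finite_simple_roots a, of "\<lambda>x. k x *\<^sub>R x"] by simp
    then have "k a = 1 \<or> k a = -1" using roots_reduced[OF \<open>a \<in> R\<close>] \<open>b \<in> R\<close> by blast
    with \<open>b = k a *\<^sub>R a\<close> have "b = a \<or> b = - a" by auto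
    then show False using b a simple_roots_subset uminus_positive_root by blast
  qed
  have "(\<Sum>x\<in>D. (k x + m x) *\<^sub>R x) = (b \<bullet> cor a) *\<^sub>R a"
    using k(2) m(2) by (simp add: scaleR_add_left sum.distrib refl_X_def flip: m(2) k(2))
  moreover have "\<forall>x\<in>D. 0 \<le> k x + m x" "0 < k g + m g" using k(1) m(1) g by auto
  ultimately show False
    using simple_combination_not_multiple[OF a, of "\<lambda>x. k x + m x"] g(1,2) by blast
qed

lemma ex_simple_root_inner_pos:
  assumes b: "b \<in> Rp"
  shows "\<exists>a\<in>D. 0 < b \<bullet> cor a"
proof (rule ccontr)
  assume none: "\<not> ?thesis"
  let ?B = "root_form (cor ` R)"
  obtain k where k: "\<forall>x\<in>D. 0 \<le> k x" "b = (\<Sum>x\<in>D. k x *\<^sub>R x)"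
    using positive_root_expansion[OF b] by blast
  have "?B b x \<le> 0" if "x \<in> D" for x
  proof -
    have "x \<in> R" using that simple_root_root by blast
    have "2 * ?B b x / ?B x x \<le> 0"
      using none that inner_coroot_eq[OF \<open>x \<in> R\<close>, of b] by auto
    then show ?thesis
      using root_form_coroots_pos[OF \<open>x \<in> R\<close>] by (simp add: divide_le_0_iff)
  qed
  then have "?B b b \<le> 0"
    using k by (subst (2) k(2)) (simp add: root_form_sum_right finite_simple_roots sum_nonpos
        mult_nonneg_nonpos)
  then show False
    using root_form_coroots_pos[of b] b positive_roots_subset by auto
qed

primrec refl_word where
  "refl_word [] = id"
| "refl_word (a # as) = sX a \<circ> refl_word as"

lemma refl_word_append: "refl_word (as @ bs) = refl_word as \<circ> refl_word bs"
  by (induction as) (simp_all add: comp_assoc)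

lemma refl_word_weyl: "set as \<subseteq> R \<Longrightarrow> \<exists>g. (refl_word as, g) \<in> W"
  by (induction as) (auto intro: weyl_id weyl_step)

lemma refl_X_positive_word: "b \<in> Rp \<Longrightarrow> \<exists>as. set as \<subseteq> D \<and> sX b = refl_word as"
proof (induction "card {c\<in>Rp. v \<bullet> c < v \<bullet> b}" arbitrary: b rule: less_induct)
  case less
  show ?case
  proof (cases "b \<in> D")
    case True
    then show ?thesis by (intro exI[of _ "[b]"]) simp
  next
    case False
    obtain a where a: "a \<in> D" "0 < b \<bullet> cor a"
      using ex_simple_root_inner_pos[OF less.prems] by blast
    then have "a \<in> R" "0 < v \<bullet> a"
      using simple_root_root simple_roots_subset inner_v_positive_root by auto
    define b' where "b' = sX a b"
    have b': "b' \<in> Rp" "b' \<in> R"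
      unfolding b'_def using refl_X_simple_positive[OF a(1) less.prems] False a(1)
        positive_roots_subset by auto
    have "v \<bullet> b' < v \<bullet> b"
      using a(2) \<open>0 < v \<bullet> a\<close> by (simp add: b'_def refl_X_def inner_diff_right)
    then have "card {c\<in>Rp. v \<bullet> c < v \<bullet> b'} < card {c\<in>Rp. v \<bullet> c < v \<bullet> b}"
      using b'(1) by (intro psubset_card_mono) (auto simp: finite_positive_roots)
    then obtain bs where bs: "set bs \<subseteq> D" "sX b' = refl_word bs"
      using less.hyps b'(1) by blast
    have "sX a \<circ> sX b' = sX b \<circ> sX a"
      using weyl_conj[OF weyl_refl[OF \<open>a \<in> R\<close>] b'(2)] \<open>a \<in> R\<close>
      by (simp add: b'_def refl_X_refl_X)
    then have "sX b = sX a \<circ> sX b' \<circ> sX a"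
      using \<open>a \<in> R\<close> by (simp add: fun_eq_iff refl_X_refl_X)
    then have "sX b = refl_word ([a] @ bs @ [a])"
      by (simp add: refl_word_append bs(2) comp_assoc)
    moreover have "set ([a] @ bs @ [a]) \<subseteq> D" using a(1) bs(1) by simp
    ultimately show ?thesis by blast
  qed
qed

lemma weyl_simple_word: "(f, g) \<in> W \<Longrightarrow> \<exists>as. set as \<subseteq> D \<and> f = refl_word as"
proof (induction rule: weyl.induct)
  case weyl_id
  show ?case by (intro exI[of _ "[]"]) simp
next
  case (weyl_step f g a)
  obtain as where as: "set as \<subseteq> D" "f = refl_word as" using weyl_step.IH by blast
  have "\<exists>bs. set bs \<subseteq> D \<and> sX a = refl_word bs"
  proof (cases "a \<in> Rp")
    case False
    then have "- a \<in> Rp" using uminus_nonpositive_root weyl_step.hyps(2) by blast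
    then show ?thesis using refl_X_positive_word refl_X_uminus[OF weyl_step.hyps(2)] by metis
  qed (rule refl_X_positive_word)
  then obtain bs where "set bs \<subseteq> D" "sX a = refl_word bs" by blast
  with as show ?case by (intro exI[of _ "bs @ as"]) (simp add: refl_word_append)
qed

lemma refl_word_exchange:
  assumes "set as \<subseteq> D" "a \<in> D" "refl_word as a \<notin> Rp"
  shows "\<exists>bs. set bs \<subseteq> D \<and> length bs < length as \<and> refl_word as \<circ> sX a = refl_word bs"
  using assms
proof (induction as)
  case Nil
  then show ?case using simple_roots_subset by auto
next
  case (Cons c as)
  then have "c \<in> D" "set as \<subseteq> D" "c \<in> R" by (auto simp: simple_root_root)
  show ?case
  proof (cases "refl_word as a \<in> Rp")
    case True
    then have "refl_word as a = c"
      using refl_X_simple_positive[OF \<open>c \<in> D\<close>] Cons.prems(3) by auto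
    obtain g where "(refl_word as, g) \<in> W"
      using refl_word_weyl \<open>set as \<subseteq> D\<close> simple_root_root by blast
    then have "refl_word as \<circ> sX a = sX c \<circ> refl_word as"
      using weyl_conj Cons.prems(2) simple_root_root \<open>refl_word as a = c\<close> by blast
    then have "refl_word (c # as) \<circ> sX a = refl_word as"
      using \<open>c \<in> R\<close> by (simp add: fun_eq_iff refl_X_refl_X)
    then show ?thesis using \<open>set as \<subseteq> D\<close> by (metis lessI length_Cons)
  next
    case False
    then obtain bs where
      "set bs \<subseteq> D" "length bs < length as" "refl_word as \<circ> sX a = refl_word bs"
      using Cons.IH \<open>set as \<subseteq> D\<close> Cons.prems(2) by blast
    then have "refl_word (c # as) \<circ> sX a = refl_word (c # bs)"
      by (simp only: refl_word.simps comp_assoc)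
    moreover have "set (c # bs) \<subseteq> D" "length (c # bs) < length (c # as)"
      using \<open>c \<in> D\<close> \<open>set bs \<subseteq> D\<close> \<open>length bs < length as\<close> by auto
    ultimately show ?thesis by blast
  qed
qed

text \<open>Induction on the word length: the last letter either adds a nonnegative multiple of a
  positive root, or the exchange condition shortens the word.\<close>
lemma dominant_minus_refl_word:
  "set as \<subseteq> D \<Longrightarrow> dominant Rp cor x \<Longrightarrow> x - refl_word as x \<in> convex_cone hull Rp"
proof (induction "length as" arbitrary: as rule: less_induct)
  case less
  show ?case
  proof (cases as rule: rev_exhaust)
    case Nil
    then show ?thesis by (simp add: convex_cone_hull_contains_0)
  next
    case (snoc bs a)
    then have "a \<in> D" "set bs \<subseteq> D" using less.prems(1) by auto
    show ?thesis
    proof (cases "refl_word bs a \<in> Rp")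
      case True
      obtain g where "(refl_word bs, g) \<in> W"
        using refl_word_weyl \<open>set bs \<subseteq> D\<close> simple_root_root by blast
      then have "x - refl_word as x = (x - refl_word bs x) + (x \<bullet> cor a) *\<^sub>R refl_word bs a"
        using snoc by (simp add: refl_word_append refl_X_def weyl_linear linear_diff linear_scale)
      moreover have "0 \<le> x \<bullet> cor a"
        using less.prems(2) \<open>a \<in> D\<close> simple_roots_subset by (auto simp: dominant_def)
      moreover have "x - refl_word bs x \<in> convex_cone hull Rp"
        using less.hyps \<open>set bs \<subseteq> D\<close> less.prems(2) snoc by simp
      ultimately show ?thesis
        using True by (metis convex_cone_hull_add convex_cone_hull_mul hull_inc)
    next
      case False
      then obtain cs where
        "set cs \<subseteq> D" "length cs < length bs" "refl_word bs \<circ> sX a = refl_word cs"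
        using refl_word_exchange \<open>set bs \<subseteq> D\<close> \<open>a \<in> D\<close> by blast
      then show ?thesis
        using less.hyps[of cs] less.prems(2) snoc by (simp add: refl_word_append)
    qed
  qed
qed

end

context positive_root_datum
begin

lemma ex_simple_roots: "\<exists>D. simple_roots R cor Rp v D"
proof -
  have "Rp \<subseteq> Rp \<and> Rp \<subseteq> convex_cone hull Rp" by (simp add: hull_subset)
  then obtain D where "D \<subseteq> Rp \<and> Rp \<subseteq> convex_cone hull D"
    "\<And>D'. D' \<subseteq> Rp \<and> Rp \<subseteq> convex_cone hull D' \<Longrightarrow> card D \<le> card D'"
    using ex_has_least_nat[of "\<lambda>D. D \<subseteq> Rp \<and> Rp \<subseteq> convex_cone hull D" Rp card] by blast
  then show ?thesis
    unfolding simple_roots_def simple_roots_axioms_def using positive_root_datum_axioms by blast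
qed

lemma dominant_minus_weyl_in_cone:
  assumes "(f, g) \<in> W" "dominant Rp cor x"
  shows "x - f x \<in> convex_cone hull Rp"
proof -
  obtain D where "simple_roots R cor Rp v D" using ex_simple_roots by blast
  then interpret simple_roots R cor Rp v D .
  show ?thesis using weyl_simple_word[OF assms(1)] dominant_minus_refl_word assms(2) by blast
qed

section \<open>The dominant point of an orbit\<close>

lemma weyl_orbit_connected:
  assumes "x \<in> weyl_orbit z" "y \<in> weyl_orbit z"
  obtains f g where "(f, g) \<in> W" "y = f x"
proof -
  obtain f1 g1 f2 g2 where "(f1, g1) \<in> W" "x = f1 z" "(f2, g2) \<in> W" "y = f2 z"
    using assms by (auto simp: weyl_orbit_iff)
  moreover obtain f' g' where "(f', g') \<in> W" "\<forall>x. f' (f1 x) = x"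
    using weyl_inverse[OF \<open>(f1, g1) \<in> W\<close>] by blast
  ultimately show thesis
    using that[of "f2 \<circ> f'" "g2 \<circ> g'"] weyl_comp by simp
qed

lemma dominant_in_weyl_orbit_unique:
  assumes "x \<in> weyl_orbit z" "y \<in> weyl_orbit z" "dominant Rp cor x" "dominant Rp cor y"
  shows "x = y"
proof -
  have "x - y \<in> convex_cone hull Rp" "y - x \<in> convex_cone hull Rp"
    using assms weyl_orbit_connected dominant_minus_weyl_in_cone by metis+
  then show ?thesis
    using convex_cone_hull_pointed[OF finite_positive_roots inner_v_positive_root, of "x - y"]
    by simp
qed

lemma dom_pt_in_weyl_orbit: "dom_pt R Rp cor z \<in> weyl_orbit z"
  and dominant_dom_pt: "dominant Rp cor (dom_pt R Rp cor z)"
proof -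
  obtain x where x: "x \<in> weyl_orbit z" "dominant Rp cor x"
    using ex_dominant_in_weyl_orbit by blast
  have "dom_pt R Rp cor z = x"
    unfolding dom_pt_def
  proof (rule the_equality)
    show "dominant Rp cor x \<and> (\<exists>w\<in>W. x = fst w z)"
      using x unfolding weyl_orbit_def by blast
    show "y = x" if "dominant Rp cor y \<and> (\<exists>w\<in>W. y = fst w z)" for y
    proof -
      have "y \<in> weyl_orbit z" using that unfolding weyl_orbit_def by blast
      then show ?thesis using that x dominant_in_weyl_orbit_unique by blast
    qed
  qed
  with x show "dom_pt R Rp cor z \<in> weyl_orbit z" "dominant Rp cor (dom_pt R Rp cor z)"
    by simp_all
qed

lemma dom_pt_minus_in_cone:
  "x \<in> weyl_orbit z \<Longrightarrow> dom_pt R Rp cor z - x \<in> convex_cone hull Rp"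
  by (metis dom_pt_in_weyl_orbit dominant_dom_pt weyl_orbit_connected dominant_minus_weyl_in_cone)

lemma inner_antidominant_nonpos:
  assumes "p \<in> convex_cone hull Rp" "\<mu> \<in> antidom_lattice Rp"
  shows "p \<bullet> \<mu> \<le> 0"
proof -
  have "\<forall>a\<in>Rp. 0 \<le> a \<bullet> (- \<mu>)" using assms(2) by (auto simp: antidom_lattice_def)
  then show ?thesis
    using assms(1) convex_cone_hull_eq_double_dual[OF finite_positive_roots] by fastforce
qed

text \<open>As \<open>w\<close> ranges over \<open>W\<close>, the values \<open>y \<bullet> l\<close> with \<open>snd w l = \<mu>\<close> are the values
  \<open>u \<bullet> \<mu>\<close> for \<open>u\<close> in the orbit of \<open>y\<close>; for antidominant \<open>\<mu>\<close> their minimum is attained at the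
  dominant point.\<close>
lemma dom_pt_inner_antidominant_le:
  assumes "w \<in> W" "snd w l \<in> antidom_lattice Rp"
  shows "dom_pt R Rp cor y \<bullet> snd w l \<le> y \<bullet> l"
proof -
  have "fst w y \<in> weyl_orbit y" using assms(1) unfolding weyl_orbit_def by blast
  then have "(dom_pt R Rp cor y - fst w y) \<bullet> snd w l \<le> 0"
    using dom_pt_minus_in_cone inner_antidominant_nonpos assms(2) by blast
  moreover have "fst w y \<bullet> snd w l = y \<bullet> l"
    using weyl_inner[of "fst w" "snd w"] assms(1) by simp
  ultimately show ?thesis by (simp add: inner_diff_left)
qed

lemma weyl_bound_iff_dom_pt:
  "(\<forall>l\<in>int_pts. \<forall>w\<in>W. snd w l \<in> antidom_lattice Rp \<longrightarrow> c \<bullet> snd w l \<le> y \<bullet> l)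
    \<longleftrightarrow> c - dom_pt R Rp cor y \<in> convex_cone hull Rp"
  (is "?bound \<longleftrightarrow> c - ?y' \<in> _")
proof
  assume ?bound
  obtain f g where fg: "(f, g) \<in> W" "?y' = f y"
    using dom_pt_in_weyl_orbit[of y] unfolding weyl_orbit_iff by blast
  obtain f' g' where "(f', g') \<in> W" "\<forall>q. g (g' q) = q"
    using weyl_inverse[OF fg(1)] by blast
  have "0 \<le> (c - ?y') \<bullet> h" if h: "h \<in> int_pts" "\<forall>a\<in>Rp. 0 \<le> a \<bullet> h" for h
  proof -
    have "- h \<in> int_pts" using h(1) by (auto simp: int_pts_def)
    then have "g' (- h) \<in> int_pts" "g (g' (- h)) \<in> antidom_lattice Rp"
      using weyl_int_pts[OF \<open>(f', g') \<in> W\<close>] h(2) \<open>\<forall>q. g (g' q) = q\<close>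
      by (auto simp: antidom_lattice_def)
    then have "c \<bullet> (- h) \<le> y \<bullet> g' (- h)"
      using \<open>?bound\<close> fg(1) \<open>\<forall>q. g (g' q) = q\<close> by fastforce
    also have "\<dots> = ?y' \<bullet> (- h)"
      using weyl_inner[OF fg(1)] fg(2) \<open>\<forall>q. g (g' q) = q\<close> by metis
    finally show ?thesis by (simp add: inner_diff_left)
  qed
  then show "c - ?y' \<in> convex_cone hull Rp"
    using inner_v_positive_root
    by (subst convex_cone_hull_eq_integral_dual[OF finite_positive_roots, of v])
      (auto simp: inner_commute)
next
  assume "c - ?y' \<in> convex_cone hull Rp"
  then have "c \<bullet> \<mu> \<le> ?y' \<bullet> \<mu>" if "\<mu> \<in> antidom_lattice Rp" for \<mu>
    using inner_antidominant_nonpos that by (fastforce simp: inner_diff_left)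
  then show ?bound
    using dom_pt_inner_antidominant_le by (meson order_trans)
qed

lemma val_gamma_weyl:
  assumes "w \<in> W"
  shows "val_gamma d Rp \<xi> w l = (real d *\<^sub>R half_sum Rp + \<xi>) \<bullet> snd w l
    - (real d *\<^sub>R half_sum Rp + \<xi>) \<bullet> l"
proof -
  have "(\<Sum>\<alpha>\<in>{\<alpha>\<in>Rp. fst w \<alpha> \<notin> Rp}. \<alpha> \<bullet> l) = half_sum Rp \<bullet> l - half_sum Rp \<bullet> snd w l"
    using sum_inversions[of "fst w" "snd w" l] assms by simp
  then show ?thesis
    by (simp only: val_gamma_def) (simp add: inner_add_left algebra_simps)
qed

end

theorem lemma2p7:
  fixes R Rp :: "(real ^ 'n) set" and cor :: "real ^ 'n \<Rightarrow> real ^ 'n"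
    and \<xi> :: "real ^ 'n" and d :: nat
  assumes "reduced_root_datum R cor"
    and "positive_system R Rp"
    and "d \<ge> 1"
    and "\<xi> \<in> int_pts" and "dominant Rp cor \<xi>"
  shows "V_xi d R Rp cor \<xi> =
    {z. root_le Rp (dom_pt R Rp cor (z + real d *\<^sub>R half_sum Rp + \<xi>))
                   (real d *\<^sub>R half_sum Rp + \<xi>)}"
proof -
  obtain v where v: "\<forall>a\<in>R. v \<bullet> a \<noteq> 0" "Rp = {a\<in>R. 0 < v \<bullet> a}"
    using assms(2) unfolding positive_system_def by blast
  interpret positive_root_datum R cor Rp v
    using assms(1) v by unfold_locales auto
  define c where "c = real d *\<^sub>R half_sum Rp + \<xi>"
  have "z \<in> V_xi d R Rp cor \<xi> \<longleftrightarrow>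
      (\<forall>l\<in>int_pts. \<forall>w\<in>W. snd w l \<in> antidom_lattice Rp \<longrightarrow> c \<bullet> snd w l \<le> (z + c) \<bullet> l)" for z
    by (auto simp: V_xi_def val_gamma_weyl c_def inner_add_left algebra_simps)
  then show ?thesis
    by (auto simp: weyl_bound_iff_dom_pt root_le_iff_convex_cone_hull finite_positive_roots
        c_def add.assoc)
qed

end
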